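(* Let $\sigma : X^* \to M$ be a monoid choice of generators for a right cancellative monoid $M$. Then the loop problem $L_\sigma(M)$ is deletion-closed: whenever $x, y, w \in \hat{X}^*$ satisfy $w \in L_\sigma(M)$ and $xwy \in L_\sigma(M)$, we have $xy \in L_\sigma(M)$.
   Context: Maps are written on the right. $X^*$ is the free monoid on $X$; a choice of generators is a surjective monoid morphism. Let $\overline{X} = \{\overline{x} : x \in X\}$ be new symbols, $\hat{X} = X \cup \overline{X}$. The loop automaton of $M$ w.r.t. $\sigma$ has vertex set $M$, for each $a \in M$, $x \in X$ an edge $a \to a(x\sigma)$ labelled $x$ and an edge $a(x\sigma) \to a$ labelled $\overline{x}$; the loop problem $L_\sigma(M) \subseteq \hat{X}^*$ is the set of labels of paths from the identity to the identity. *)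

theory Defs
  imports Main
begin

text \<open>Free monoid X* = lists over 'x. Hat X = X + overline X: Inl x is x, Inr x is overline x.
Maps written on the right: a(x sigma) is  a * sigma [x].\<close>

definition monoid_hom_list :: "('x list \<Rightarrow> 'm::monoid_mult) \<Rightarrow> bool" where
  "monoid_hom_list \<sigma> \<longleftrightarrow> \<sigma> [] = 1 \<and> (\<forall>u v. \<sigma> (u @ v) = \<sigma> u * \<sigma> v)"

definition choice_of_generators :: "('x list \<Rightarrow> 'm::monoid_mult) \<Rightarrow> bool" where
  "choice_of_generators \<sigma> \<longleftrightarrow> monoid_hom_list \<sigma> \<and> surj \<sigma>"

definition right_cancellative :: "'m::monoid_mult itself \<Rightarrow> bool" where
  "right_cancellative _ \<longleftrightarrow> (\<forall>a b c :: 'm. a * c = b * c \<longrightarrow> a = b)"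

fun loop_edge :: "('x list \<Rightarrow> 'm::monoid_mult) \<Rightarrow> 'm \<Rightarrow> ('x + 'x) \<Rightarrow> 'm \<Rightarrow> bool" where
  "loop_edge \<sigma> a (Inl x) b \<longleftrightarrow> b = a * \<sigma> [x]"
| "loop_edge \<sigma> a (Inr x) b \<longleftrightarrow> a = b * \<sigma> [x]"

inductive loop_path :: "('x list \<Rightarrow> 'm::monoid_mult) \<Rightarrow> 'm \<Rightarrow> ('x + 'x) list \<Rightarrow> 'm \<Rightarrow> bool"
  for \<sigma> where
  Nil: "loop_path \<sigma> a [] a"
| Cons: "loop_edge \<sigma> a l b \<Longrightarrow> loop_path \<sigma> b w c \<Longrightarrow> loop_path \<sigma> a (l # w) c"

definition loop_problem :: "('x list \<Rightarrow> 'm::monoid_mult) \<Rightarrow> ('x + 'x) list set" where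
  "loop_problem \<sigma> = {w. loop_path \<sigma> 1 w 1}"

end

theory Submission
  imports Defs
begin

text \<open>Left multiplication by a fixed element maps paths of the loop automaton to paths, so the
loop \<open>w\<close> at the identity becomes a loop at every vertex. Right cancellativity makes the
automaton deterministic (the target \<open>b\<close> of an inverse edge out of \<open>a\<close> solves \<open>a = b * \<sigma> [x]\<close>), so
the subpath read along \<open>w\<close> inside the loop \<open>xwy\<close> starts and ends at the same vertex and can be
cut out.\<close>

inductive_simps loop_path_Nil_iff: "loop_path \<sigma> a [] c"
inductive_simps loop_path_Cons_iff: "loop_path \<sigma> a (l # w) c"

lemma loop_path_append_iff:
  "loop_path \<sigma> a (u @ v) c \<longleftrightarrow> (\<exists>b. loop_path \<sigma> a u b \<and> loop_path \<sigma> b v c)"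
  by (induction u arbitrary: a) (auto simp: loop_path_Nil_iff loop_path_Cons_iff)

lemma loop_edge_mult_left: "loop_edge \<sigma> a l b \<Longrightarrow> loop_edge \<sigma> (e * a) l (e * b)"
  by (cases l) (auto simp: mult.assoc)

lemma loop_path_mult_left: "loop_path \<sigma> a w b \<Longrightarrow> loop_path \<sigma> (e * a) w (e * b)"
  by (induction rule: loop_path.induct) (auto intro: loop_path.intros loop_edge_mult_left)

lemma loop_edge_unique:
  fixes \<sigma> :: "'x list \<Rightarrow> 'm::monoid_mult"
  assumes "right_cancellative TYPE('m)"
    and "loop_edge \<sigma> a l b" and "loop_edge \<sigma> a l b'"
  shows "b = b'"
  using assms unfolding right_cancellative_def by (cases l) auto

lemma loop_path_unique:
  fixes \<sigma> :: "'x list \<Rightarrow> 'm::monoid_mult"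
  assumes "right_cancellative TYPE('m)"
  shows "loop_path \<sigma> a w b \<Longrightarrow> loop_path \<sigma> a w b' \<Longrightarrow> b = b'"
proof (induction arbitrary: b' rule: loop_path.induct)
  case (Nil a)
  then show ?case by (simp add: loop_path_Nil_iff)
next
  case (Cons a l b w c)
  from Cons.prems obtain d where "loop_edge \<sigma> a l d" and "loop_path \<sigma> d w b'"
    by (auto simp: loop_path_Cons_iff)
  with Cons.hyps(1) Cons.IH show ?case
    using loop_edge_unique[OF assms] by blast
qed

theorem proposition7p4:
  fixes \<sigma> :: "'x list \<Rightarrow> 'm::monoid_mult"
  assumes "choice_of_generators \<sigma>"
    and "right_cancellative TYPE('m)"
    and "w \<in> loop_problem \<sigma>"
    and "x @ w @ y \<in> loop_problem \<sigma>"
  shows "x @ y \<in> loop_problem \<sigma>"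
proof -
  from assms(4) obtain a b where
    x: "loop_path \<sigma> 1 x a" and w: "loop_path \<sigma> a w b" and y: "loop_path \<sigma> b y 1"
    unfolding loop_problem_def by (auto simp: loop_path_append_iff)
  from assms(3) have "loop_path \<sigma> a w a"
    unfolding loop_problem_def using loop_path_mult_left[of \<sigma> 1 w 1 a] by simp
  with w have "b = a"
    by (rule loop_path_unique[OF assms(2)])
  with x y show ?thesis
    unfolding loop_problem_def by (auto simp: loop_path_append_iff)
qed

end
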